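(* Let $x$ be a dyadic rational with $x\ge 0$. Then there exists a tower $T$ with $T=x$ such that every story $S$ of $T$ satisfies $S\ge 0$.
   Context: Games are short normal-play combinatorial games with the usual disjunctive sum $+$ and order/equality of values. Canonical integers: $0\cong\{\mid\}$, $n\cong\{n-1\mid\}$ for $n>0$, $n\cong\{\mid n+1\}$ for $n<0$. The ordinal sum is $G\mathbin{:}H\cong\{L(G),\,G\mathbin{:}L(H)\mid R(G),\,G\mathbin{:}R(H)\}$ (it is associative), and $\bigodot_{i=1}^n G_i$ denotes $G_1\mathbin{:}G_2\mathbin{:}\cdots\mathbin{:}G_n$. A tower is a game $T=\bigodot_{i=1}^n(b_i+r_i)$ where each $b_i$ is a non-negative integer in canonical form and each $r_i$ is a non-positive integer in canonical form; each $b_i+r_i$ is called a story of $T$. *)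

theory Defs
  imports Complex_Main
begin

datatype game = Game "game list" "game list"

fun lopts :: "game \<Rightarrow> game list" where "lopts (Game L R) = L"
fun ropts :: "game \<Rightarrow> game list" where "ropts (Game L R) = R"

lemma size_mem_lt: "x \<in> set xs \<Longrightarrow> size x < Suc (size_list size xs + n)"
  by (induction xs) auto

lemma size_mem_lt2: "x \<in> set xs \<Longrightarrow> size x < Suc (n + size_list size xs)"
  by (induction xs) auto

function game_le :: "game \<Rightarrow> game \<Rightarrow> bool" where
  "game_le (Game GL GR) (Game HL HR) =
     ((\<forall>gl\<in>set GL. \<not> game_le (Game HL HR) gl) \<and>
      (\<forall>hr\<in>set HR. \<not> game_le hr (Game GL GR)))"
  by pat_completeness auto
termination
  by (relation "measure (\<lambda>(g, h). size g + size h)")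
     (auto dest: size_mem_lt size_mem_lt2)

definition game_eq :: "game \<Rightarrow> game \<Rightarrow> bool" where
  "game_eq G H \<longleftrightarrow> game_le G H \<and> game_le H G"

function game_plus :: "game \<Rightarrow> game \<Rightarrow> game" where
  "game_plus (Game GL GR) (Game HL HR) =
     Game (map (\<lambda>gl. game_plus gl (Game HL HR)) GL @ map (\<lambda>hl. game_plus (Game GL GR) hl) HL)
          (map (\<lambda>gr. game_plus gr (Game HL HR)) GR @ map (\<lambda>hr. game_plus (Game GL GR) hr) HR)"
  by pat_completeness auto
termination
  by (relation "measure (\<lambda>(g, h). size g + size h)")
     (auto dest: size_mem_lt size_mem_lt2)

fun ord_sum :: "game \<Rightarrow> game \<Rightarrow> game" where
  "ord_sum G (Game HL HR) =
     Game (lopts G @ map (ord_sum G) HL) (ropts G @ map (ord_sum G) HR)"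

definition zero_game :: game where "zero_game = Game [] []"

function int_game :: "int \<Rightarrow> game" where
  "int_game n = (if n = 0 then Game [] []
                 else if n > 0 then Game [int_game (n - 1)] []
                 else Game [] [int_game (n + 1)])"
  by auto
termination by (relation "measure (\<lambda>n. nat \<bar>n\<bar>)") auto

text \<open>Canonical form of the dyadic rational m / 2^k.\<close>
fun dyadic_game :: "int \<Rightarrow> nat \<Rightarrow> game" where
  "dyadic_game m 0 = int_game m"
| "dyadic_game m (Suc k) =
     (if even m then dyadic_game (m div 2) k
      else Game [dyadic_game ((m - 1) div 2) k] [dyadic_game ((m + 1) div 2) k])"

text \<open>A story b + r, given by (b, r') with b = b and r = -r' (b, r' \<ge> 0).\<close>
definition story :: "nat \<times> nat \<Rightarrow> game" where
  "story s = game_plus (int_game (int (fst s))) (int_game (- int (snd s)))"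

text \<open>The tower S_1 : S_2 : ... : S_n (n \<ge> 1), ordinal sum associated to the right
(ordinal sum is associative).\<close>
fun ord_sum_list :: "game list \<Rightarrow> game" where
  "ord_sum_list [] = zero_game"
| "ord_sum_list [G] = G"
| "ord_sum_list (G # Gs) = ord_sum G (ord_sum_list Gs)"

definition tower :: "(nat \<times> nat) list \<Rightarrow> game" where
  "tower ss = ord_sum_list (map story ss)"

end

(* Write x = b + y with b = floor x and 0 <= y < 1. The story (b + 1) + (-1) is a form
   {b - 1 | b + 1} of b, and a simplicity argument shows that its ordinal sum with a
   canonical dyadic H >= 0 has value b + squash H, where squash maps [n, n + 1] affinely
   onto [1 - 1/2^n, 1 - 1/2^(n+1)]. As squash maps the non-negative dyadics of denominator
   2^k onto those of denominator 2^(k+1) in [0, 1), y = squash z for a dyadic z of smaller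
   denominator; putting (b + 1) + (-1) in front of a tower for z gives a tower for x, since
   ordinal sum respects equality in its second argument. Integers are single stories b + 0. *)

theory Submission
  imports Defs
begin

section \<open>Order and ordinal sum of game forms\<close>

lemma game_le_iff:
  "game_le G H \<longleftrightarrow>
     (\<forall>gl\<in>set (lopts G). \<not> game_le H gl) \<and> (\<forall>hr\<in>set (ropts H). \<not> game_le hr G)"
  by (cases G; cases H) simp

lemma size_lopt_less: "l \<in> set (lopts G) \<Longrightarrow> size l < size G"
  by (cases G) (auto dest: size_mem_lt)

lemma size_ropt_less: "r \<in> set (ropts G) \<Longrightarrow> size r < size G"
  by (cases G) (auto dest: size_mem_lt2)

lemma game_le_refl: "game_le G G"
proof (induction G)
  case (Game L R)
  have "\<not> game_le (Game L R) l" if "l \<in> set L" for l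
    using that Game.IH(1)[OF that] game_le_iff[of "Game L R" l] by auto
  moreover have "\<not> game_le r (Game L R)" if "r \<in> set R" for r
    using that Game.IH(2)[OF that] game_le_iff[of r "Game L R"] by auto
  ultimately show ?case by simp
qed

lemma lopt_not_ge: "l \<in> set (lopts G) \<Longrightarrow> \<not> game_le G l"
  using game_le_iff[of G l] game_le_refl[of l] by auto

lemma ropt_not_le: "r \<in> set (ropts G) \<Longrightarrow> \<not> game_le r G"
  using game_le_iff[of r G] game_le_refl[of r] by auto

lemma game_le_trans: "game_le A B \<Longrightarrow> game_le B C \<Longrightarrow> game_le A C"
proof (induction "size A + size B + size C" arbitrary: A B C rule: less_induct)
  case less
  show ?case unfolding game_le_iff[of A C]
  proof (intro conjI ballI notI)
    fix l assume l: "l \<in> set (lopts A)" and "game_le C l"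
    with less have "game_le B l" using less.hyps[of B C l] size_lopt_less[OF l] by simp
    with less.prems(1) l show False unfolding game_le_iff[of A B] by auto
  next
    fix r assume r: "r \<in> set (ropts C)" and "game_le r A"
    with less have "game_le r B" using less.hyps[of r A B] size_ropt_less[OF r] by simp
    with less.prems(2) r show False unfolding game_le_iff[of B C] by auto
  qed
qed

lemma game_eq_refl: "game_eq G G"
  by (simp add: game_eq_def game_le_refl)

lemma game_eq_trans: "game_eq G H \<Longrightarrow> game_eq H K \<Longrightarrow> game_eq G K"
  unfolding game_eq_def using game_le_trans by blast

lemma game_eq_if_options_dominated:
  assumes "\<forall>l\<in>set (lopts G). \<not> game_le D l" "\<forall>r\<in>set (ropts G). \<not> game_le r D"
    and "\<forall>l'\<in>set (lopts D). \<exists>l\<in>set (lopts G). game_le l' l"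
    and "\<forall>r'\<in>set (ropts D). \<exists>r\<in>set (ropts G). game_le r r'"
  shows "game_eq G D"
  unfolding game_eq_def game_le_iff[of G D] game_le_iff[of D G]
  using assms game_le_trans lopt_not_ge ropt_not_le by meson

lemma lopts_ord_sum: "lopts (ord_sum S H) = lopts S @ map (ord_sum S) (lopts H)"
  by (cases H) simp

lemma ropts_ord_sum: "ropts (ord_sum S H) = ropts S @ map (ord_sum S) (ropts H)"
  by (cases H) simp

lemma ord_sum_le_cancel: "game_le (ord_sum S H) (ord_sum S H') \<longleftrightarrow> game_le H H'"
proof (induction "size H + size H'" arbitrary: H H' rule: less_induct)
  case less
  have "\<forall>l\<in>set (lopts S). \<not> game_le (ord_sum S H') l"
    using lopt_not_ge[of _ "ord_sum S H'"] by (simp add: lopts_ord_sum)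
  moreover have "\<forall>r\<in>set (ropts S). \<not> game_le r (ord_sum S H)"
    using ropt_not_le[of _ "ord_sum S H"] by (simp add: ropts_ord_sum)
  moreover have "game_le (ord_sum S H') (ord_sum S l) \<longleftrightarrow> game_le H' l" if "l \<in> set (lopts H)" for l
    using less size_lopt_less[OF that] by simp
  moreover have "game_le (ord_sum S r) (ord_sum S H) \<longleftrightarrow> game_le r H" if "r \<in> set (ropts H')" for r
    using less size_ropt_less[OF that] by simp
  ultimately show ?case
    unfolding game_le_iff[of "ord_sum S H"] game_le_iff[of H H'] lopts_ord_sum ropts_ord_sum
    by auto
qed

lemma ord_sum_cong: "game_eq H H' \<Longrightarrow> game_eq (ord_sum S H) (ord_sum S H')"
  unfolding game_eq_def using ord_sum_le_cancel by blast

section \<open>Canonical dyadic forms\<close>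

definition dyadic :: "int \<Rightarrow> nat \<Rightarrow> rat" where
  "dyadic m k = of_int m / 2 ^ k"

lemma dyadic_0 [simp]: "dyadic m 0 = of_int m"
  by (simp add: dyadic_def)

lemma dyadic_scale: "dyadic (m * 2 ^ d) (k + d) = dyadic m k"
  by (simp add: dyadic_def power_add)

lemma dyadic_less_iff: "dyadic m k < dyadic m' k \<longleftrightarrow> m < m'"
  by (simp add: dyadic_def divide_less_cancel)

lemma dyadic_succ: "dyadic (m + 1) k = dyadic m k + 1 / 2 ^ k"
  by (simp add: dyadic_def add_divide_distrib)

lemma dyadic_pred: "dyadic (m - 1) k = dyadic m k - 1 / 2 ^ k"
  by (simp add: dyadic_def diff_divide_distrib)

lemma dyadic_pos_iff: "0 < dyadic m k \<longleftrightarrow> 0 < m"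
  by (simp add: dyadic_def zero_less_divide_iff)

lemma dyadic_neg_iff: "dyadic m k < 0 \<longleftrightarrow> m < 0"
  by (simp add: dyadic_def divide_less_0_iff)

lemma dyadic_nonneg_iff: "0 \<le> dyadic m k \<longleftrightarrow> 0 \<le> m"
  using dyadic_neg_iff[of m k] by linarith

lemma dyadic_eq_iff: "dyadic m k = dyadic m' k \<longleftrightarrow> m = m'"
  by (simp add: dyadic_def)

lemma dyadic_Suc: "dyadic m (Suc k) = dyadic m k / 2"
  by (simp add: dyadic_def)

lemma dyadic_int_add: "of_int c + dyadic m k = dyadic (c * 2 ^ k + m) k"
  by (simp add: dyadic_def add_divide_distrib)

lemma dyadic_between_imp_finer:
  assumes "dyadic a j < dyadic c i" and "dyadic c i < dyadic (a + 1) j"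
  shows "j < i"
proof (rule ccontr)
  assume "\<not> j < i"
  then obtain d where "j = i + d"
    using le_Suc_ex not_less by blast
  then have "dyadic c i = dyadic (c * 2 ^ d) j"
    by (simp add: dyadic_scale)
  with assms have "a < c * 2 ^ d" and "c * 2 ^ d < a + 1"
    by (simp_all add: dyadic_less_iff)
  then show False by simp
qed

text \<open>The right-hand side is \<open>game_le\<close> unfolded once on the canonical forms of
  \<open>p/2^q\<close> and \<open>p'/2^q'\<close>, whose options are the neighbours \<open>(p - 1)/2^q\<close> and
  \<open>(p' + 1)/2^q'\<close> (see \<open>dyadic_game_reduced\<close>).\<close>
lemma dyadic_le_iff_neighbours:
  "dyadic p q \<le> dyadic p' q' \<longleftrightarrow>
     ((0 < q \<or> 0 < p) \<longrightarrow> dyadic (p - 1) q < dyadic p' q') \<and>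
     ((0 < q' \<or> p' < 0) \<longrightarrow> dyadic p q < dyadic (p' + 1) q')"
  (is "?le \<longleftrightarrow> (?left \<longrightarrow> ?l) \<and> (?right \<longrightarrow> ?r)")
proof
  assume ?le
  moreover have "(0::rat) < 1 / 2 ^ q" "(0::rat) < 1 / 2 ^ q'" by simp_all
  ultimately show "(?left \<longrightarrow> ?l) \<and> (?right \<longrightarrow> ?r)"
    unfolding dyadic_pred dyadic_succ by (intro conjI impI) linarith+
next
  assume opts: "(?left \<longrightarrow> ?l) \<and> (?right \<longrightarrow> ?r)"
  show "dyadic p q \<le> dyadic p' q'"
  proof (rule ccontr)
    assume "\<not> ?thesis"
    then have less: "dyadic p' q' < dyadic p q" by simp
    have finer: "q < q'" if ?left
      using dyadic_between_imp_finer[of "p - 1" q p' q'] opts that less by simp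
    have coarser: "q' < q" if ?right
      using dyadic_between_imp_finer[of p' q' p q] opts that less by simp
    consider ?left ?right | "\<not> ?left" | "\<not> ?right" by blast
    then show False
    proof cases
      case 2
      then have "dyadic p q \<le> 0" by simp
      with less have "p' < 0" using dyadic_neg_iff[of p' q'] by linarith
      then show False using coarser 2 by simp
    next
      case 3
      then have "0 \<le> dyadic p' q'" by simp
      with less have "0 < p" using dyadic_pos_iff[of p q] by linarith
      then show False using finer 3 by simp
    qed (use finer coarser in simp)
  qed
qed

lemma int_game_0: "int_game 0 = zero_game"
  by (subst int_game.simps) (simp add: zero_game_def)

lemma int_game_pos: "0 < n \<Longrightarrow> int_game n = Game [int_game (n - 1)] []"
  by (subst int_game.simps) simp

lemma int_game_neg: "n < 0 \<Longrightarrow> int_game n = Game [] [int_game (n + 1)]"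
  by (subst int_game.simps) simp

declare int_game.simps [simp del]

lemma dyadic_game_reduce:
  "\<exists>p q. dyadic_game p q = dyadic_game m k \<and> dyadic p q = dyadic m k \<and> q \<le> k \<and> (q = 0 \<or> odd p)"
proof (induction k arbitrary: m)
  case (Suc k)
  show ?case
  proof (cases "even m")
    case True
    then have "dyadic (m div 2) k = dyadic m (Suc k)"
      using dyadic_scale[of "m div 2" 1 k] by simp
    with True Suc.IH[of "m div 2"] show ?thesis by (metis dyadic_game.simps(2) le_SucI)
  qed blast
qed blast

lemma dyadic_game_reduced:
  assumes "q = 0 \<or> odd p"
  shows "dyadic_game p q =
    Game (if 0 < q \<or> 0 < p then [dyadic_game (p - 1) q] else [])
         (if 0 < q \<or> p < 0 then [dyadic_game (p + 1) q] else [])"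
proof (cases q)
  case 0
  consider "0 < p" | "p = 0" | "p < 0" by linarith
  then show ?thesis
    by cases (simp_all add: 0 int_game_pos int_game_neg int_game_0 zero_game_def)
next
  case (Suc q')
  with assms have "even (p - 1)" "even (p + 1)" by simp_all
  with Suc assms show ?thesis by simp
qed

lemma lopts_dyadic_game:
  "q = 0 \<or> odd p \<Longrightarrow>
     lopts (dyadic_game p q) = (if 0 < q \<or> 0 < p then [dyadic_game (p - 1) q] else [])"
  by (subst dyadic_game_reduced) auto

lemma ropts_dyadic_game:
  "q = 0 \<or> odd p \<Longrightarrow>
     ropts (dyadic_game p q) = (if 0 < q \<or> p < 0 then [dyadic_game (p + 1) q] else [])"
  by (subst dyadic_game_reduced) auto

lemma game_le_dyadic_game_iff:
  "game_le (dyadic_game m k) (dyadic_game m' k') \<longleftrightarrow> dyadic m k \<le> dyadic m' k'"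
proof (induction "size (dyadic_game m k) + size (dyadic_game m' k')"
    arbitrary: m k m' k' rule: less_induct)
  case less
  obtain p q where pq: "dyadic_game p q = dyadic_game m k" "dyadic p q = dyadic m k" "q = 0 \<or> odd p"
    using dyadic_game_reduce by blast
  obtain p' q' where pq': "dyadic_game p' q' = dyadic_game m' k'" "dyadic p' q' = dyadic m' k'"
    "q' = 0 \<or> odd p'"
    using dyadic_game_reduce by blast
  let ?G = "dyadic_game p q" and ?H = "dyadic_game p' q'"
  have left: "game_le ?H (dyadic_game (p - 1) q) \<longleftrightarrow> dyadic p' q' \<le> dyadic (p - 1) q"
    if "0 < q \<or> 0 < p"
  proof -
    have "size (dyadic_game (p - 1) q) < size ?G"
      using that by (intro size_lopt_less) (simp add: lopts_dyadic_game[OF pq(3)])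
    then show ?thesis using less.hyps[of p' q' "p - 1" q] pq pq' by simp
  qed
  have right: "game_le (dyadic_game (p' + 1) q') ?G \<longleftrightarrow> dyadic (p' + 1) q' \<le> dyadic p q"
    if "0 < q' \<or> p' < 0"
  proof -
    have "size (dyadic_game (p' + 1) q') < size ?H"
      using that by (intro size_ropt_less) (simp add: ropts_dyadic_game[OF pq'(3)])
    then show ?thesis using less.hyps[of "p' + 1" q' p q] pq pq' by simp
  qed
  have "game_le ?G ?H \<longleftrightarrow> dyadic p q \<le> dyadic p' q'"
    unfolding game_le_iff[of ?G] dyadic_le_iff_neighbours lopts_dyadic_game[OF pq(3)]
      ropts_dyadic_game[OF pq'(3)]
    using left right by (auto simp: not_le)
  with pq pq' show ?case by simp
qed

definition has_value :: "game \<Rightarrow> rat \<Rightarrow> bool" where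
  "has_value G v \<longleftrightarrow> (\<exists>m k. game_eq G (dyadic_game m k) \<and> v = dyadic m k)"

lemma has_value_dyadic_game: "has_value (dyadic_game m k) (dyadic m k)"
  unfolding has_value_def using game_eq_refl by blast

lemma has_value_int_game: "has_value (int_game c) (of_int c)"
  using has_value_dyadic_game[of c 0] by simp

lemma has_value_game_le_iff: "has_value G v \<Longrightarrow> has_value H w \<Longrightarrow> game_le G H \<longleftrightarrow> v \<le> w"
  unfolding has_value_def game_eq_def using game_le_trans game_le_dyadic_game_iff by metis

lemma has_value_game_eq: "game_eq G H \<Longrightarrow> has_value H v \<Longrightarrow> has_value G v"
  unfolding has_value_def using game_eq_trans by blast

lemma game_eq_dyadic_game_if_has_value: "has_value G (dyadic m k) \<Longrightarrow> game_eq G (dyadic_game m k)"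
  using has_value_game_le_iff[OF _ has_value_dyadic_game] has_value_game_le_iff[OF has_value_dyadic_game]
  unfolding game_eq_def by blast

text \<open>The options of the canonical form of x lie at
  distance \<open>1/2^q \<ge> 1/2^K\<close> from x (a left one only if \<open>q > 0\<close> or \<open>x > 0\<close>, a right one
  only if \<open>q > 0\<close> or \<open>x < 0\<close>), so they are dominated by the gap options of G.\<close>
lemma has_value_by_simplicity:
  assumes lefts: "\<forall>l\<in>set (lopts G). \<exists>v. has_value l v \<and> v < x"
    and rights: "\<forall>r\<in>set (ropts G). \<exists>v. has_value r v \<and> x < v"
    and x: "x = dyadic M K"
    and left_gap: "0 < K \<or> 0 < x \<Longrightarrow> \<exists>l\<in>set (lopts G). has_value l (x - 1 / 2 ^ K)"
    and right_gap: "0 < K \<or> x < 0 \<Longrightarrow> \<exists>r\<in>set (ropts G). has_value r (x + 1 / 2 ^ K)"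
  shows "has_value G x"
proof -
  obtain p q where pq: "dyadic_game p q = dyadic_game M K" "dyadic p q = x" "q \<le> K" "q = 0 \<or> odd p"
    using dyadic_game_reduce x by metis
  let ?D = "dyadic_game p q"
  have D: "has_value ?D x"
    using pq(2) has_value_dyadic_game by blast
  have step: "(1::rat) / 2 ^ K \<le> 1 / 2 ^ q"
    using pq(3) by (intro divide_left_mono power_increasing) simp_all
  have "game_eq G ?D"
  proof (rule game_eq_if_options_dominated)
    show "\<forall>l\<in>set (lopts G). \<not> game_le ?D l" "\<forall>r\<in>set (ropts G). \<not> game_le r ?D"
      using lefts rights has_value_game_le_iff[OF D] has_value_game_le_iff[OF _ D] by (meson not_le)+
    show "\<forall>l'\<in>set (lopts ?D). \<exists>l\<in>set (lopts G). game_le l' l"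
    proof
      fix l' assume "l' \<in> set (lopts ?D)"
      then have l': "l' = dyadic_game (p - 1) q" and "0 < K \<or> 0 < x"
        using pq(2,3) dyadic_pos_iff by (auto simp: lopts_dyadic_game[OF pq(4)] split: if_splits)
      with left_gap obtain l where "l \<in> set (lopts G)" "has_value l (x - 1 / 2 ^ K)"
        by blast
      moreover have "has_value l' (x - 1 / 2 ^ q)"
        using l' pq(2) has_value_dyadic_game dyadic_pred by metis
      ultimately show "\<exists>l\<in>set (lopts G). game_le l' l"
        using step has_value_game_le_iff by fastforce
    qed
    show "\<forall>r'\<in>set (ropts ?D). \<exists>r\<in>set (ropts G). game_le r r'"
    proof
      fix r' assume "r' \<in> set (ropts ?D)"
      then have r': "r' = dyadic_game (p + 1) q" and "0 < K \<or> x < 0"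
        using pq(2,3) dyadic_neg_iff by (auto simp: ropts_dyadic_game[OF pq(4)] split: if_splits)
      with right_gap obtain r where "r \<in> set (ropts G)" "has_value r (x + 1 / 2 ^ K)"
        by blast
      moreover have "has_value r' (x + 1 / 2 ^ q)"
        using r' pq(2) has_value_dyadic_game dyadic_succ by metis
      ultimately show "\<exists>r\<in>set (ropts G). game_le r r'"
        using step has_value_game_le_iff by fastforce
    qed
  qed
  with D show ?thesis using has_value_game_eq by blast
qed

section \<open>Ordinal sums with a form of an integer\<close>

text \<open>For a form \<open>S = {c - 1 | c + 1}\<close> of the integer c, the ordinal sum \<open>S : H\<close> has
  value \<open>c + squash H\<close> (\<open>has_value_ord_sum\<close> below).\<close>
definition squash :: "rat \<Rightarrow> rat" where
  "squash w = (let n = nat \<lfloor>w\<rfloor> in 1 - 1 / 2 ^ n + (w - of_nat n) / 2 ^ (n + 1))"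

lemma squash_eq:
  assumes "of_nat n \<le> w" and "w \<le> of_nat n + 1"
  shows "squash w = 1 - 1 / 2 ^ n + (w - of_nat n) / 2 ^ (n + 1)"
proof (cases "w < of_nat n + 1")
  case True
  with assms have "\<lfloor>w\<rfloor> = int n" by (simp add: floor_eq_iff)
  then show ?thesis by (simp add: squash_def)
next
  case False
  with assms have w: "w = of_nat (Suc n)" by simp
  then have "nat \<lfloor>w\<rfloor> = Suc n" by simp
  then show ?thesis unfolding squash_def Let_def w by (simp add: field_simps)
qed

lemma squash_affine:
  assumes "of_nat n \<le> w" "w \<le> of_nat n + 1" "of_nat n \<le> w'" "w' \<le> of_nat n + 1"
  shows "squash w' = squash w + (w' - w) / 2 ^ (n + 1)"
  using assms by (simp add: squash_eq diff_divide_distrib)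

lemma squash_of_nat: "squash (of_nat n) = 1 - 1 / 2 ^ n"
  using squash_eq[of n "of_nat n"] by simp

lemma squash_half: "0 \<le> w \<Longrightarrow> w \<le> 1 \<Longrightarrow> squash w = w / 2"
  using squash_eq[of 0 w] by simp

lemma floor_bounds_nat:
  fixes w :: rat
  assumes "0 \<le> w"
  shows "of_nat (nat \<lfloor>w\<rfloor>) \<le> w" and "w < of_nat (nat \<lfloor>w\<rfloor>) + 1"
  using assms by linarith+

lemma squash_plus_1:
  assumes "0 \<le> w"
  shows "squash (w + 1) = (1 + squash w) / 2"
proof -
  define n where "n = nat \<lfloor>w\<rfloor>"
  have n: "of_nat n \<le> w" "w \<le> of_nat n + 1"
    using floor_bounds_nat[OF assms] unfolding n_def by simp_all
  then have "squash (w + 1) = 1 - 1 / 2 ^ Suc n + (w + 1 - of_nat (Suc n)) / 2 ^ (Suc n + 1)"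
    by (intro squash_eq) simp_all
  with n show ?thesis by (simp add: squash_eq field_simps)
qed

lemma squash_floor_bounds:
  assumes "0 \<le> w"
  shows "1 - 1 / 2 ^ nat \<lfloor>w\<rfloor> \<le> squash w" and "squash w < 1 - 1 / 2 ^ (nat \<lfloor>w\<rfloor> + 1)"
proof -
  define n where "n = nat \<lfloor>w\<rfloor>"
  have n: "of_nat n \<le> w" "w < of_nat n + 1"
    using floor_bounds_nat[OF assms] unfolding n_def by simp_all
  then have "squash w = 1 - 1 / 2 ^ n + (w - of_nat n) / 2 ^ (n + 1)"
    by (intro squash_eq) simp_all
  moreover have "0 \<le> (w - of_nat n) / 2 ^ (n + 1)" "(w - of_nat n) / 2 ^ (n + 1) < 1 / 2 ^ (n + 1)"
    using n by (simp_all add: divide_strict_right_mono)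
  moreover have "(1::rat) / 2 ^ n = 2 * (1 / 2 ^ (n + 1))" by simp
  ultimately show "1 - 1 / 2 ^ n \<le> squash w" "squash w < 1 - 1 / 2 ^ (n + 1)"
    by linarith+
qed

lemma squash_nonneg: "0 \<le> w \<Longrightarrow> 0 \<le> squash w"
proof -
  have "(1::rat) / 2 ^ nat \<lfloor>w\<rfloor> \<le> 1" by simp
  then show "0 \<le> w \<Longrightarrow> 0 \<le> squash w" using squash_floor_bounds(1)[of w] by linarith
qed

lemma squash_less_1: "0 \<le> w \<Longrightarrow> squash w < 1"
proof -
  have "(0::rat) < 1 / 2 ^ (nat \<lfloor>w\<rfloor> + 1)" by simp
  then show "0 \<le> w \<Longrightarrow> squash w < 1" using squash_floor_bounds(2)[of w] by linarith
qed

lemma squash_strict_mono: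
  assumes "0 \<le> w" and "w < w'"
  shows "squash w < squash w'"
proof (cases "nat \<lfloor>w\<rfloor> = nat \<lfloor>w'\<rfloor>")
  case True
  then show ?thesis
    using assms floor_bounds_nat[of w] floor_bounds_nat[of w']
      squash_affine[of "nat \<lfloor>w\<rfloor>" w w'] by simp
next
  case False
  moreover have "nat \<lfloor>w\<rfloor> \<le> nat \<lfloor>w'\<rfloor>"
    using assms(2) by (simp add: floor_mono nat_mono)
  ultimately have "nat \<lfloor>w\<rfloor> + 1 \<le> nat \<lfloor>w'\<rfloor>"
    by simp
  then have "(1::rat) / 2 ^ nat \<lfloor>w'\<rfloor> \<le> 1 / 2 ^ (nat \<lfloor>w\<rfloor> + 1)"
    by (intro divide_left_mono power_increasing) simp_all
  then show ?thesis
    using assms squash_floor_bounds(2)[of w] squash_floor_bounds(1)[of w'] by linarith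
qed

lemma squash_surj_dyadic:
  assumes "0 \<le> u" and "dyadic u (Suc k) < 1"
  shows "\<exists>M\<ge>0. squash (dyadic M k) = dyadic u (Suc k)"
proof -
  have small: "\<exists>M\<ge>0. squash (dyadic M k) = dyadic u (Suc k)"
    if "0 \<le> u" "dyadic u (Suc k) \<le> 1 / 2" for u k
    using that squash_half[of "dyadic u k"] by (intro exI[of _ u]) (simp add: dyadic_Suc dyadic_nonneg_iff)
  show ?thesis
    using assms
  proof (induction k arbitrary: u)
    case 0
    then have "u \<le> 1" by (simp add: dyadic_def)
    with 0 show ?case by (intro small) (simp_all add: dyadic_def)
  next
    case (Suc k)
    show ?case
    proof (cases "dyadic u (Suc (Suc k)) \<le> 1 / 2")
      case False
      define u' where "u' = u - 2 ^ Suc k"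
      have u': "dyadic u' (Suc k) = 2 * dyadic u (Suc (Suc k)) - 1"
        by (simp add: u'_def dyadic_def diff_divide_distrib)
      with False Suc.prems have "0 \<le> u'" "dyadic u' (Suc k) < 1"
        using dyadic_nonneg_iff[of u' "Suc k"] by linarith+
      then obtain M where "0 \<le> M" and M: "squash (dyadic M k) = dyadic u' (Suc k)"
        using Suc.IH by blast
      have "dyadic (2 * M + 2 ^ Suc k) (Suc k) = dyadic M k + 1"
        by (simp add: dyadic_def add_divide_distrib)
      moreover have "0 \<le> dyadic M k"
        using \<open>0 \<le> M\<close> by (simp add: dyadic_nonneg_iff)
      ultimately have "squash (dyadic (2 * M + 2 ^ Suc k) (Suc k)) = dyadic u (Suc (Suc k))"
        using M u' by (simp add: squash_plus_1)
      with \<open>0 \<le> M\<close> show ?thesis by (intro exI[of _ "2 * M + 2 ^ Suc k"]) simp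
    qed (use small Suc.prems in blast)
  qed
qed

lemma squash_dyadic_odd:
  assumes "odd p" "0 < q" "0 \<le> p"
  defines "K \<equiv> nat \<lfloor>dyadic p q\<rfloor> + 1 + q"
  shows "squash (dyadic (p - 1) q) = squash (dyadic p q) - 1 / 2 ^ K"
    and "squash (dyadic (p + 1) q) = squash (dyadic p q) + 1 / 2 ^ K"
    and "\<exists>M. squash (dyadic p q) = dyadic M K"
proof -
  define n where "n = nat \<lfloor>dyadic p q\<rfloor>"
  have "0 \<le> dyadic p q"
    using assms(3) by (simp add: dyadic_nonneg_iff)
  then have n: "of_nat n \<le> dyadic p q" "dyadic p q < of_nat n + 1"
    using floor_bounds_nat unfolding n_def by blast+
  have "dyadic p q \<noteq> of_nat n"
  proof
    assume "dyadic p q = of_nat n"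
    then have "p = int n * 2 ^ q"
      using dyadic_scale[of "int n" q 0] dyadic_eq_iff by (metis add_0 dyadic_0 of_int_of_nat_eq)
    with assms(1,2) show False by simp
  qed
  with n have "dyadic (int n) 0 < dyadic p q" by simp
  then have left: "of_nat n \<le> dyadic (p - 1) q"
    using dyadic_between_imp_finer[of "p - 1" q "int n" 0] by fastforce
  have "dyadic p q < dyadic (int n + 1) 0" using n by simp
  then have right: "dyadic (p + 1) q \<le> of_nat n + 1"
    using dyadic_between_imp_finer[of p q "int n + 1" 0] by fastforce
  have "(0::rat) < 1 / 2 ^ q" by simp
  with left right have "dyadic (p - 1) q \<le> of_nat n + 1" "of_nat n \<le> dyadic (p + 1) q"
    unfolding dyadic_pred dyadic_succ by linarith+
  have K_n: "K = n + 1 + q"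
    by (simp add: K_def n_def)
  then have K: "(1::rat) / 2 ^ q / 2 ^ (n + 1) = 1 / 2 ^ K"
    by (simp add: power_add mult.commute)
  show "squash (dyadic (p - 1) q) = squash (dyadic p q) - 1 / 2 ^ K"
    using squash_affine[of n "dyadic p q" "dyadic (p - 1) q"] n left \<open>dyadic (p - 1) q \<le> _\<close> K
    by (simp add: dyadic_pred diff_divide_distrib)
  show "squash (dyadic (p + 1) q) = squash (dyadic p q) + 1 / 2 ^ K"
    using squash_affine[of n "dyadic p q" "dyadic (p + 1) q"] n right \<open>_ \<le> dyadic (p + 1) q\<close> K
    by (simp add: dyadic_succ)
  have "squash (dyadic p q) = 1 - 1 / 2 ^ n + (of_int p / 2 ^ q - of_nat n) / (2 * 2 ^ n)"
    using squash_eq[of n "dyadic p q"] n by (simp add: dyadic_def)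
  also have "\<dots> = (2 * 2 ^ n * 2 ^ q - 2 * 2 ^ q + of_int p - of_nat n * 2 ^ q) / (2 * 2 ^ n * 2 ^ q)"
    by (simp add: field_simps)
  also have "\<dots> = dyadic (2 ^ K - 2 ^ (q + 1) + p - int n * 2 ^ q) K"
    unfolding K_n dyadic_def by (simp add: power_add mult_ac)
  finally show "\<exists>M. squash (dyadic p q) = dyadic M K" ..
qed

context
  fixes S L R :: game and c :: int
  assumes opts_S: "lopts S = [L]" "ropts S = [R]"
    and values_S: "has_value L (of_int c - 1)" "has_value R (of_int c + 1)"
begin

lemma set_opts_ord_sum_dyadic_game:
  assumes "q = 0 \<or> odd p" and "0 \<le> p"
  shows "set (lopts (ord_sum S (dyadic_game p q))) =
      insert L (if 0 < q \<or> 0 < p then {ord_sum S (dyadic_game (p - 1) q)} else {})"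
    and "set (ropts (ord_sum S (dyadic_game p q))) =
      insert R (if 0 < q then {ord_sum S (dyadic_game (p + 1) q)} else {})"
  using assms by (simp_all add: lopts_ord_sum ropts_ord_sum opts_S lopts_dyadic_game ropts_dyadic_game)

lemma opts_ord_sum_dyadic_game_bounds:
  assumes reduced: "q = 0 \<or> odd p" and "0 \<le> p"
    and left: "0 < q \<or> 0 < p \<Longrightarrow>
      has_value (ord_sum S (dyadic_game (p - 1) q)) (of_int c + squash (dyadic (p - 1) q))"
    and right: "0 < q \<Longrightarrow>
      has_value (ord_sum S (dyadic_game (p + 1) q)) (of_int c + squash (dyadic (p + 1) q))"
  shows "\<forall>l\<in>set (lopts (ord_sum S (dyadic_game p q))).
      \<exists>v. has_value l v \<and> v < of_int c + squash (dyadic p q)"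
    and "\<forall>r\<in>set (ropts (ord_sum S (dyadic_game p q))).
      \<exists>v. has_value r v \<and> of_int c + squash (dyadic p q) < v"
proof -
  note opts = set_opts_ord_sum_dyadic_game[OF reduced \<open>0 \<le> p\<close>]
  have z: "0 \<le> dyadic p q"
    using \<open>0 \<le> p\<close> by (simp add: dyadic_nonneg_iff)
  have "0 \<le> dyadic (p - 1) q" if "0 < q \<or> 0 < p"
    using that reduced \<open>0 \<le> p\<close> by (auto simp: dyadic_nonneg_iff elim: oddE)
  then have left_less: "squash (dyadic (p - 1) q) < squash (dyadic p q)" if "0 < q \<or> 0 < p"
    using that squash_strict_mono by (simp add: dyadic_pred)
  have right_less: "squash (dyadic p q) < squash (dyadic (p + 1) q)"
    using z squash_strict_mono by (simp add: dyadic_succ)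
  show "\<forall>l\<in>set (lopts (ord_sum S (dyadic_game p q))).
      \<exists>v. has_value l v \<and> v < of_int c + squash (dyadic p q)"
    unfolding opts
  proof (intro ballI)
    fix l assume "l \<in> insert L (if 0 < q \<or> 0 < p then {ord_sum S (dyadic_game (p - 1) q)} else {})"
    then consider "l = L" | "0 < q \<or> 0 < p" "l = ord_sum S (dyadic_game (p - 1) q)"
      by (auto split: if_splits)
    then show "\<exists>v. has_value l v \<and> v < of_int c + squash (dyadic p q)"
      using values_S(1) squash_nonneg[OF z] left left_less
      by cases (force, auto)
  qed
  show "\<forall>r\<in>set (ropts (ord_sum S (dyadic_game p q))).
      \<exists>v. has_value r v \<and> of_int c + squash (dyadic p q) < v"
    unfolding opts
  proof (intro ballI)
    fix r assume "r \<in> insert R (if 0 < q then {ord_sum S (dyadic_game (p + 1) q)} else {})"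
    then consider "r = R" | "0 < q" "r = ord_sum S (dyadic_game (p + 1) q)"
      by (auto split: if_splits)
    then show "\<exists>v. has_value r v \<and> of_int c + squash (dyadic p q) < v"
      using values_S(2) squash_less_1[OF z] right right_less
      by cases (force, auto)
  qed
qed

lemma has_value_ord_sum_int:
  assumes "0 \<le> p"
    and left: "0 < p \<Longrightarrow>
      has_value (ord_sum S (dyadic_game (p - 1) 0)) (of_int c + squash (dyadic (p - 1) 0))"
  shows "has_value (ord_sum S (dyadic_game p 0)) (of_int c + squash (dyadic p 0))"
proof -
  let ?G = "ord_sum S (dyadic_game p 0)" and ?x = "of_int c + squash (dyadic p 0)"
  define n where "n = nat p"
  have p: "dyadic p 0 = of_nat n"
    using \<open>0 \<le> p\<close> by (simp add: n_def)
  note opts = set_opts_ord_sum_dyadic_game[of 0 p, OF disjI1[OF refl] \<open>0 \<le> p\<close>]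
  have x: "?x = dyadic ((c + 1) * 2 ^ n - 1) n"
    unfolding p by (simp add: squash_of_nat dyadic_def diff_divide_distrib)
  show ?thesis
  proof (rule has_value_by_simplicity[OF opts_ord_sum_dyadic_game_bounds[of 0 p] x])
    show "\<exists>l\<in>set (lopts ?G). has_value l (?x - 1 / 2 ^ n)"
    proof (cases n)
      case 0
      then have "?x - 1 / 2 ^ n = of_int c - 1"
        unfolding p squash_of_nat by simp
      moreover have "L \<in> set (lopts ?G)"
        unfolding opts by simp
      ultimately show ?thesis
        using values_S(1) by metis
    next
      case (Suc n')
      then have "0 < p" "dyadic (p - 1) 0 = of_nat n'"
        using \<open>0 \<le> p\<close> n_def by auto
      moreover have "?x - 1 / 2 ^ n = of_int c + squash (of_nat n')"
        unfolding p squash_of_nat using Suc by simp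
      moreover have "ord_sum S (dyadic_game (p - 1) 0) \<in> set (lopts ?G)"
        unfolding opts using \<open>0 < p\<close> by simp
      ultimately show ?thesis
        using left by metis
    qed
    have "?x + 1 / 2 ^ n = of_int c + 1"
      unfolding p squash_of_nat by simp
    moreover have "R \<in> set (ropts ?G)"
      unfolding opts by simp
    ultimately show "\<exists>r\<in>set (ropts ?G). has_value r (?x + 1 / 2 ^ n)"
      using values_S(2) by metis
  qed (use \<open>0 \<le> p\<close> left in simp_all)
qed

lemma has_value_ord_sum_odd:
  assumes "odd p" "0 < q" "0 \<le> p"
    and left: "has_value (ord_sum S (dyadic_game (p - 1) q)) (of_int c + squash (dyadic (p - 1) q))"
    and right: "has_value (ord_sum S (dyadic_game (p + 1) q)) (of_int c + squash (dyadic (p + 1) q))"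
  shows "has_value (ord_sum S (dyadic_game p q)) (of_int c + squash (dyadic p q))"
proof -
  let ?G = "ord_sum S (dyadic_game p q)" and ?x = "of_int c + squash (dyadic p q)"
  note opts = set_opts_ord_sum_dyadic_game[of q p]
  define K where "K = nat \<lfloor>dyadic p q\<rfloor> + 1 + q"
  obtain M where "squash (dyadic p q) = dyadic M K"
    using squash_dyadic_odd(3)[OF assms(1-3)] K_def by blast
  then have x: "?x = dyadic (c * 2 ^ K + M) K"
    using dyadic_int_add by simp
  show ?thesis
  proof (rule has_value_by_simplicity[OF opts_ord_sum_dyadic_game_bounds[of q p] x])
    have "?x - 1 / 2 ^ K = of_int c + squash (dyadic (p - 1) q)"
      using squash_dyadic_odd(1)[OF assms(1-3)] by (simp add: K_def)
    moreover have "ord_sum S (dyadic_game (p - 1) q) \<in> set (lopts ?G)"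
      using assms by (simp add: opts)
    ultimately show "\<exists>l\<in>set (lopts ?G). has_value l (?x - 1 / 2 ^ K)"
      using left by metis
    have "?x + 1 / 2 ^ K = of_int c + squash (dyadic (p + 1) q)"
      using squash_dyadic_odd(2)[OF assms(1-3)] by (simp add: K_def)
    moreover have "ord_sum S (dyadic_game (p + 1) q) \<in> set (ropts ?G)"
      using assms by (simp add: opts)
    ultimately show "\<exists>r\<in>set (ropts ?G). has_value r (?x + 1 / 2 ^ K)"
      using right by metis
  qed (use assms left right in simp_all)
qed

lemma has_value_ord_sum:
  "0 \<le> a \<Longrightarrow> has_value (ord_sum S (dyadic_game a j)) (of_int c + squash (dyadic a j))"
proof (induction "size (dyadic_game a j)" arbitrary: a j rule: less_induct)
  case less
  obtain p q where pq: "dyadic_game p q = dyadic_game a j" "dyadic p q = dyadic a j" "q = 0 \<or> odd p"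
    using dyadic_game_reduce by blast
  have "0 \<le> p"
    using less.prems pq(2) dyadic_nonneg_iff by metis
  have IH: "has_value (ord_sum S (dyadic_game p' q)) (of_int c + squash (dyadic p' q))"
    if "size (dyadic_game p' q) < size (dyadic_game p q)" and "0 \<le> p'" for p'
    using less.hyps that unfolding pq(1) by blast
  have left: "has_value (ord_sum S (dyadic_game (p - 1) q)) (of_int c + squash (dyadic (p - 1) q))"
    if "0 < p"
    using that by (intro IH size_lopt_less) (simp_all add: lopts_dyadic_game[OF pq(3)])
  have right: "has_value (ord_sum S (dyadic_game (p + 1) q)) (of_int c + squash (dyadic (p + 1) q))"
    if "0 < q"
    using that \<open>0 \<le> p\<close> by (intro IH size_ropt_less) (simp_all add: ropts_dyadic_game[OF pq(3)])
  have "has_value (ord_sum S (dyadic_game p q)) (of_int c + squash (dyadic p q))"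
  proof (cases "q = 0")
    case True
    from left have "0 < p \<Longrightarrow>
        has_value (ord_sum S (dyadic_game (p - 1) 0)) (of_int c + squash (dyadic (p - 1) 0))"
      unfolding True .
    from has_value_ord_sum_int[OF \<open>0 \<le> p\<close> this] show ?thesis
      unfolding True .
  next
    case False
    with pq(3) have "odd p" "0 < q"
      by auto
    with \<open>0 \<le> p\<close> have "0 < p"
      by (cases "p = 0") auto
    from \<open>odd p\<close> \<open>0 < q\<close> \<open>0 \<le> p\<close> left[OF \<open>0 < p\<close>] right[OF \<open>0 < q\<close>] show ?thesis
      by (rule has_value_ord_sum_odd)
  qed
  with pq show ?case by simp
qed

end

section \<open>Towers\<close>

lemma game_plus_zero_right: "game_plus G zero_game = G"
  by (induction G) (simp add: zero_game_def map_idI)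

lemma story_nat: "story (b, 0) = int_game (int b)"
  by (simp add: story_def int_game_0 game_plus_zero_right)

lemma story_0_1: "story (0, 1) = int_game (- 1)"
  by (simp add: story_def int_game_0 int_game_neg zero_game_def)

lemma story_Suc_1: "story (Suc b, 1) = Game [story (b, 1)] [int_game (int (Suc b))]"
  by (simp add: story_def int_game_pos int_game_neg int_game_0 game_plus_zero_right)

lemma has_value_story_1: "has_value (story (b, 1)) (of_nat b - 1)"
proof (induction b)
  case 0
  show ?case unfolding story_0_1 using has_value_int_game[of "- 1"] by simp
next
  case (Suc b)
  have "has_value (int_game (int (Suc b))) (of_nat b + 1)"
    using has_value_int_game[of "int (Suc b)"] by (simp add: add.commute)
  with Suc.IH have "has_value (story (Suc b, 1)) (dyadic (int b) 0)"
    unfolding story_Suc_1 by (intro has_value_by_simplicity[where M = "int b" and K = 0]) auto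
  then show ?case by simp
qed

lemma zero_game_le_story_Suc_1: "game_le zero_game (story (Suc b, 1))"
  using has_value_game_le_iff[OF has_value_int_game[of 0] has_value_story_1[of "Suc b"]]
  by (simp add: int_game_0)

lemma has_value_story_Suc_ord_sum:
  "0 \<le> a \<Longrightarrow>
    has_value (ord_sum (story (Suc b, 1)) (dyadic_game a j)) (of_nat b + squash (dyadic a j))"
  using has_value_ord_sum[of "story (Suc b, 1)" "story (b, 1)" "int_game (int (Suc b))" "int b"]
    has_value_story_1[of b] has_value_int_game[of "int (Suc b)"]
  unfolding story_Suc_1 by (simp add: add.commute)

lemma tower_Cons: "ss \<noteq> [] \<Longrightarrow> tower (s # ss) = ord_sum (story s) (tower ss)"
  by (cases ss) (simp_all add: tower_def)

lemma tower_nat: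
  "has_value (tower [(n, 0)]) (of_nat n) \<and> game_le zero_game (story (n, 0))"
  using has_value_int_game[of "int n"]
    has_value_game_le_iff[OF has_value_int_game[of 0] has_value_int_game[of "int n"]]
  by (simp add: tower_def story_nat int_game_0)

lemma dyadic_split_floor:
  assumes "0 \<le> m"
  obtains b u where "dyadic m k = of_nat b + dyadic u k" and "0 \<le> u" and "dyadic u k < 1"
proof -
  define b where "b = nat \<lfloor>dyadic m k\<rfloor>"
  define u where "u = m - int b * 2 ^ k"
  have x: "dyadic m k = of_nat b + dyadic u k"
    by (simp add: u_def dyadic_def diff_divide_distrib)
  have "0 \<le> dyadic m k"
    using assms by (simp add: dyadic_nonneg_iff)
  with x floor_bounds_nat[of "dyadic m k"] have "0 \<le> u" "dyadic u k < 1"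
    using dyadic_nonneg_iff[of u k] unfolding b_def by linarith+
  with x that show thesis by blast
qed

lemma tower_nonneg_stories_exists:
  "0 \<le> m \<Longrightarrow>
    \<exists>ss. ss \<noteq> [] \<and> has_value (tower ss) (dyadic m k) \<and> (\<forall>s\<in>set ss. game_le zero_game (story s))"
proof (induction k arbitrary: m)
  case 0
  with tower_nat[of "nat m"] show ?case
    by (intro exI[of _ "[(nat m, 0)]"]) simp
next
  case (Suc k)
  obtain b u where x: "dyadic m (Suc k) = of_nat b + dyadic u (Suc k)"
    and "0 \<le> u" "dyadic u (Suc k) < 1"
    using dyadic_split_floor[OF Suc.prems] by blast
  then obtain M where "0 \<le> M" and M: "squash (dyadic M k) = dyadic u (Suc k)"
    using squash_surj_dyadic by blast
  then obtain ss where ss: "ss \<noteq> []" "has_value (tower ss) (dyadic M k)"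
    "\<forall>s\<in>set ss. game_le zero_game (story s)"
    using Suc.IH by blast
  then obtain a j where aj: "game_eq (tower ss) (dyadic_game a j)" "dyadic M k = dyadic a j"
    unfolding has_value_def by blast
  with \<open>0 \<le> M\<close> have "0 \<le> a"
    using dyadic_nonneg_iff by metis
  then have "has_value (ord_sum (story (Suc b, 1)) (dyadic_game a j)) (dyadic m (Suc k))"
    using has_value_story_Suc_ord_sum x M aj(2) by metis
  then have "has_value (tower ((Suc b, 1) # ss)) (dyadic m (Suc k))"
    using has_value_game_eq[OF ord_sum_cong[OF aj(1)]] tower_Cons[OF ss(1)] by simp
  with ss(3) zero_game_le_story_Suc_1 show ?case
    by (intro exI[of _ "(Suc b, 1) # ss"]) auto
qed

theorem theorem3p4:
  fixes x :: rat and m :: int and k :: nat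
  assumes "x = of_int m / 2 ^ k" and "x \<ge> 0"
  shows "\<exists>ss :: (nat \<times> nat) list. ss \<noteq> [] \<and>
           game_eq (tower ss) (dyadic_game m k) \<and>
           (\<forall>s\<in>set ss. game_le zero_game (story s))"
proof -
  from assms have "0 \<le> m"
    using dyadic_nonneg_iff unfolding dyadic_def by metis
  then show ?thesis
    using tower_nonneg_stories_exists game_eq_dyadic_game_if_has_value by blast
qed

end
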